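(* For every integer $k\ge 2$, let $T(k,2)$ be the complete $k$-ary tree of height 2 (a root $x$ with children $x_1,\dots,x_k$, each $x_i$ having exactly $k$ children $x_{i1},\dots,x_{ik}$, which are leaves). Then $\tau(T(k,2))=k$ and $\beta_p(T(k,2))=k+1$.
   Context: Two vertices $u,v$ are twins if $N(u)\setminus\{v\}=N(v)\setminus\{u\}$; the twin number $\tau(G)$ is the maximum cardinality of an equivalence class of the twin relation. For a partition $\Pi=\{S_1,\dots,S_m\}$ of $V(G)$, $r(u|\Pi)=(d(u,S_1),\dots,d(u,S_m))$ with $d(u,S)=\min_{w\in S}d(u,w)$; $\Pi$ is locating if $r(u|\Pi)\ne r(v|\Pi)$ for all distinct $u,v$; $\beta_p(G)$ is the minimum size of a locating partition. *)

theory Defs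
  imports Main "HOL-Library.Disjoint_Sets"
begin

text \<open>A (simple, undirected) graph is given by a vertex set V and an adjacency
  relation E; only edges between vertices of V matter.\<close>

definition nbhd :: "'a set \<Rightarrow> ('a \<Rightarrow> 'a \<Rightarrow> bool) \<Rightarrow> 'a \<Rightarrow> 'a set" where
  "nbhd V E u = {w \<in> V. E u w}"

definition twins :: "'a set \<Rightarrow> ('a \<Rightarrow> 'a \<Rightarrow> bool) \<Rightarrow> 'a \<Rightarrow> 'a \<Rightarrow> bool" where
  "twins V E u v \<longleftrightarrow> nbhd V E u - {v} = nbhd V E v - {u}"

definition twin_class :: "'a set \<Rightarrow> ('a \<Rightarrow> 'a \<Rightarrow> bool) \<Rightarrow> 'a \<Rightarrow> 'a set" where
  "twin_class V E u = {v \<in> V. twins V E u v}"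

definition twin_number :: "'a set \<Rightarrow> ('a \<Rightarrow> 'a \<Rightarrow> bool) \<Rightarrow> nat" where
  "twin_number V E = Max ((\<lambda>u. card (twin_class V E u)) ` V)"

definition gdist :: "'a set \<Rightarrow> ('a \<Rightarrow> 'a \<Rightarrow> bool) \<Rightarrow> 'a \<Rightarrow> 'a \<Rightarrow> nat" where
  "gdist V E u v = (LEAST n. \<exists>p. length p = Suc n \<and> hd p = u \<and> last p = v \<and>
       set p \<subseteq> V \<and> (\<forall>i<n. E (p ! i) (p ! Suc i)))"

definition setdist :: "'a set \<Rightarrow> ('a \<Rightarrow> 'a \<Rightarrow> bool) \<Rightarrow> 'a \<Rightarrow> 'a set \<Rightarrow> nat" where
  "setdist V E u S = Min ((\<lambda>w. gdist V E u w) ` S)"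

definition locating :: "'a set \<Rightarrow> ('a \<Rightarrow> 'a \<Rightarrow> bool) \<Rightarrow> 'a set set \<Rightarrow> bool" where
  "locating V E P \<longleftrightarrow> (\<forall>u\<in>V. \<forall>v\<in>V. u \<noteq> v \<longrightarrow> (\<exists>S\<in>P. setdist V E u S \<noteq> setdist V E v S))"

definition partition_dim :: "'a set \<Rightarrow> ('a \<Rightarrow> 'a \<Rightarrow> bool) \<Rightarrow> nat" where
  "partition_dim V E = (LEAST m. \<exists>P. partition_on V P \<and> locating V E P \<and> card P = m)"

text \<open>Complete k-ary tree of height 2: root [], children [i], grandchildren [i,j].\<close>
definition tree_V :: "nat \<Rightarrow> nat list set" where
  "tree_V k = {[]} \<union> {[i] | i. i < k} \<union> {[i, j] | i j. i < k \<and> j < k}"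

definition tree_E :: "nat list \<Rightarrow> nat list \<Rightarrow> bool" where
  "tree_E xs ys \<longleftrightarrow> (\<exists>i. ys = xs @ [i] \<or> xs = ys @ [i])"

end

theory Submission
  imports Defs
begin

text \<open>Distances in T(k,2), a prefix-closed set of lists, are tree distances
  |u| + |v| - 2 |common prefix|. The only twins are sibling leaves, so the twin number
  is k, and the root together with the classes of vertices sharing their last label is a
  locating partition with k + 1 parts. Conversely, suppose a locating partition had at most
  k parts. The k leaves below a child are twins, hence lie in distinct parts, so every part
  contains a grandchild below each child; then every child is at distance at most 1 from
  every part, so two children in one part would have the same distance vector. Hence every
  part also contains a child, the root is at distance at most 1 from every part as well,
  and it cannot be told apart from a child lying in its own part.\<close>

definition walk :: "'a set \<Rightarrow> ('a \<Rightarrow> 'a \<Rightarrow> bool) \<Rightarrow> 'a \<Rightarrow> 'a \<Rightarrow> nat \<Rightarrow> bool" where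
  "walk V E u v n \<longleftrightarrow> (\<exists>p. length p = Suc n \<and> hd p = u \<and> last p = v \<and> set p \<subseteq> V \<and>
     (\<forall>i<n. E (p ! i) (p ! Suc i)))"

lemma gdist_eq_Least_walk: "gdist V E u v = (LEAST n. walk V E u v n)"
  by (simp add: gdist_def walk_def)

lemma walk_refl: "u \<in> V \<Longrightarrow> walk V E u u 0"
  unfolding walk_def by (intro exI[of _ "[u]"]) simp

lemma walk_snoc:
  assumes "walk V E u v n" "E v w" "w \<in> V"
  shows "walk V E u w (Suc n)"
proof -
  obtain p where p: "length p = Suc n" "hd p = u" "last p = v" "set p \<subseteq> V"
    "\<forall>i<n. E (p ! i) (p ! Suc i)"
    using assms(1) unfolding walk_def by blast
  have "p ! n = v" using p(1,3) last_conv_nth[of p] by (cases "p = []") auto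
  then have "\<forall>i<Suc n. E ((p @ [w]) ! i) ((p @ [w]) ! Suc i)"
    using p(1,5) assms(2) by (auto simp: nth_append less_Suc_eq)
  with p assms(3) show ?thesis
    unfolding walk_def by (intro exI[of _ "p @ [w]"]) (auto simp: hd_append)
qed

lemma walk_rev:
  assumes "walk V E u v n" "\<And>x y. E x y \<Longrightarrow> E y x"
  shows "walk V E v u n"
proof -
  obtain p where p: "length p = Suc n" "hd p = u" "last p = v" "set p \<subseteq> V"
    "\<forall>i<n. E (p ! i) (p ! Suc i)"
    using assms(1) unfolding walk_def by blast
  have "E (rev p ! i) (rev p ! Suc i)" if "i < n" for i
    using p(1) p(5)[rule_format, of "n - Suc i"] assms(2) that
    by (simp add: rev_nth Suc_diff_Suc)
  with p show ?thesis
    unfolding walk_def by (intro exI[of _ "rev p"]) (auto simp: hd_rev last_rev)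
qed

lemma twins_sym: "twins V E u v \<Longrightarrow> twins V E v u"
  unfolding twins_def by blast

lemma not_twinsI:
  "w \<in> nbhd V E u \<Longrightarrow> w \<notin> nbhd V E v \<Longrightarrow> w \<noteq> u \<Longrightarrow> w \<noteq> v \<Longrightarrow> \<not> twins V E u v"
  unfolding twins_def by blast

lemma locating_eqI:
  assumes "locating V E P" "u \<in> V" "v \<in> V" "\<forall>S\<in>P. setdist V E u S = setdist V E v S"
  shows "u = v"
  using assms unfolding locating_def by blast

lemma partition_on_part_unique:
  assumes "partition_on V P" "S \<in> P" "T \<in> P" "x \<in> S" "x \<in> T"
  shows "S = T"
  using disjointD[OF partition_onD2[OF assms(1)] assms(2,3)] assms(4,5) by blast

lemma partition_on_meets_every_part:
  assumes P: "partition_on V P" "finite V" and A: "A \<subseteq> V" "card P \<le> card A"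
    and sparse: "\<And>S x y. S \<in> P \<Longrightarrow> x \<in> A \<Longrightarrow> y \<in> A \<Longrightarrow> x \<in> S \<Longrightarrow> y \<in> S \<Longrightarrow> x = y"
    and "S \<in> P"
  shows "\<exists>x\<in>A. x \<in> S"
proof -
  have "\<forall>x\<in>A. \<exists>T\<in>P. x \<in> T"
    using A(1) partition_onD1[OF P(1)] by blast
  then obtain f where f: "\<And>x. x \<in> A \<Longrightarrow> f x \<in> P \<and> x \<in> f x"
    by metis
  have "inj_on f A"
    by (rule inj_onI) (use f sparse in metis)
  then have "card (f ` A) = card A" by (rule card_image)
  moreover have "finite P" using finite_elements[OF P(2,1)] .
  moreover have "f ` A \<subseteq> P" using f by blast
  ultimately have "f ` A = P"
    using A(2) by (metis card_mono card_subset_eq le_antisym)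
  with f \<open>S \<in> P\<close> show ?thesis by force
qed

fun common_prefix_length :: "'a list \<Rightarrow> 'a list \<Rightarrow> nat" where
  "common_prefix_length (x # xs) (y # ys) =
     (if x = y then Suc (common_prefix_length xs ys) else 0)"
| "common_prefix_length _ _ = 0"

lemma common_prefix_length_le:
  "common_prefix_length u v \<le> length u" "common_prefix_length u v \<le> length v"
  by (induction u v rule: common_prefix_length.induct) auto

lemma common_prefix_length_self: "common_prefix_length u u = length u"
  by (induction u) auto

lemma take_common_prefix_length:
  "take (common_prefix_length u v) u = take (common_prefix_length u v) v"
  by (induction u v rule: common_prefix_length.induct) auto

lemma common_prefix_length_eq_length_imp_eq:
  "common_prefix_length u v = length u \<Longrightarrow> length u = length v \<Longrightarrow> u = v"
  by (induction u v rule: common_prefix_length.induct) (auto split: if_splits)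

lemma common_prefix_length_snoc:
  "common_prefix_length u (x @ [i]) = common_prefix_length u x \<or>
   common_prefix_length u (x @ [i]) = Suc (common_prefix_length u x) \<and>
   common_prefix_length u x = length x"
proof (induction u arbitrary: x)
  case (Cons a u)
  then show ?case by (cases x) auto
qed simp

definition tree_dist :: "'a list \<Rightarrow> 'a list \<Rightarrow> nat" where
  "tree_dist u v = length u + length v - 2 * common_prefix_length u v"

lemma tree_dist_eq_0_iff: "tree_dist u v = 0 \<longleftrightarrow> u = v"
proof
  assume "tree_dist u v = 0"
  then show "u = v"
    using common_prefix_length_le[of u v] common_prefix_length_eq_length_imp_eq[of u v]
    by (simp add: tree_dist_def)
qed (simp add: tree_dist_def common_prefix_length_self)

lemma tree_dist_self [simp]: "tree_dist u u = 0"
  by (simp add: tree_dist_eq_0_iff)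

lemma tree_dist_snoc:
  "tree_dist u (x @ [i]) \<le> Suc (tree_dist u x)" "tree_dist u x \<le> Suc (tree_dist u (x @ [i]))"
  using common_prefix_length_snoc[of u x i] common_prefix_length_le[of u x]
    common_prefix_length_le[of u "x @ [i]"]
  unfolding tree_dist_def by auto

lemma tree_dist_edge: "tree_E x y \<Longrightarrow> tree_dist u y \<le> Suc (tree_dist u x)"
  unfolding tree_E_def using tree_dist_snoc by (metis (no_types))

lemma tree_dist_le_walk:
  assumes "walk V tree_E u v n"
  shows "tree_dist u v \<le> n"
proof -
  obtain p where p: "length p = Suc n" "hd p = u" "last p = v"
    "\<forall>i<n. tree_E (p ! i) (p ! Suc i)"
    using assms unfolding walk_def by blast
  have "tree_dist u (p ! i) \<le> i" if "i \<le> n" for i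
    using that
  proof (induction i)
    case 0
    then show ?case using p(1,2) by (cases p) (auto simp: tree_dist_eq_0_iff)
  next
    case (Suc i)
    then show ?case using p(4) tree_dist_edge[of "p ! i" "p ! Suc i" u] by fastforce
  qed
  then show ?thesis using p(1,3) last_conv_nth[of p] by (cases "p = []") auto
qed

definition prefix_closed :: "'a list set \<Rightarrow> bool" where
  "prefix_closed V \<longleftrightarrow> (\<forall>w\<in>V. \<forall>n. take n w \<in> V)"

lemma walk_down_prefixes:
  assumes "prefix_closed V" "v \<in> V" "walk V tree_E u (take l v) a" "l + n \<le> length v"
  shows "walk V tree_E u (take (l + n) v) (a + n)"
  using assms(3,4)
proof (induction n)
  case (Suc n)
  have "take (l + Suc n) v = take (l + n) v @ [v ! (l + n)]"
    using Suc.prems(2) by (simp add: take_Suc_conv_app_nth)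
  then have "tree_E (take (l + n) v) (take (l + Suc n) v)"
    by (simp add: tree_E_def)
  with Suc assms(1,2) show ?case
    by (simp add: walk_snoc prefix_closed_def)
qed simp

lemma walk_tree_dist:
  assumes "prefix_closed V" "u \<in> V" "v \<in> V"
  shows "walk V tree_E u v (tree_dist u v)"
proof -
  define l where "l = common_prefix_length u v"
  have l: "l \<le> length u" "l \<le> length v" "take l u = take l v"
    using common_prefix_length_le take_common_prefix_length unfolding l_def by blast+
  have "walk V tree_E (take l u) (take l u) 0"
    using assms(1,2) by (simp add: walk_refl prefix_closed_def)
  then have "walk V tree_E (take l u) u (length u - l)"
    using walk_down_prefixes[OF assms(1,2), of "take l u" l 0 "length u - l"] l by simp
  then have "walk V tree_E u (take l v) (length u - l)"
    using walk_rev[of V tree_E] l(3) by (auto simp: tree_E_def)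
  then have "walk V tree_E u v (length u - l + (length v - l))"
    using walk_down_prefixes[OF assms(1,3), of u l "length u - l" "length v - l"] l by simp
  then show ?thesis using l by (simp add: tree_dist_def l_def mult_2)
qed

lemma gdist_prefix_closed:
  assumes "prefix_closed V" "u \<in> V" "v \<in> V"
  shows "gdist V tree_E u v = tree_dist u v"
  unfolding gdist_eq_Least_walk
  by (rule Least_equality) (use walk_tree_dist[OF assms] tree_dist_le_walk in auto)

lemma tree_V_simps [simp]:
  "[] \<in> tree_V k"
  "[a] \<in> tree_V k \<longleftrightarrow> a < k"
  "[a, b] \<in> tree_V k \<longleftrightarrow> a < k \<and> b < k"
  "a # b # c # w \<notin> tree_V k"
  by (auto simp: tree_V_def)

lemma tree_V_cases [consumes 1, case_names root child grandchild]:
  assumes "u \<in> tree_V k"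
  obtains "u = []" | a where "a < k" "u = [a]" | a b where "a < k" "b < k" "u = [a, b]"
  using assms by (auto simp: tree_V_def)

lemma finite_tree_V: "finite (tree_V k)"
proof -
  have "tree_V k = {[]} \<union> (\<lambda>i. [i]) ` {..<k} \<union> (\<lambda>(i, j). [i, j]) ` ({..<k} \<times> {..<k})"
    by (auto simp: tree_V_def)
  then show ?thesis by simp
qed

lemma prefix_closed_tree_V: "prefix_closed (tree_V k)"
  unfolding prefix_closed_def
proof (intro ballI allI)
  fix w n assume "w \<in> tree_V k"
  then show "take n w \<in> tree_V k"
    by (cases rule: tree_V_cases) (auto simp: take_Cons')
qed

lemma tree_E_simps [simp]:
  "tree_E [] [a]" "tree_E [a] []" "tree_E [a] [a, b]" "tree_E [a, b] [a]"
  "\<not> tree_E [] []" "\<not> tree_E [a] [c]" "\<not> tree_E [] [a, b]" "\<not> tree_E [a, b] []"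
  "tree_E [a] [c, d] \<longleftrightarrow> a = c" "tree_E [c, d] [a] \<longleftrightarrow> a = c"
  "\<not> tree_E [a, b] [c, d]"
  by (auto simp: tree_E_def)

lemma nbhd_tree_V:
  "nbhd (tree_V k) tree_E [] = (\<lambda>i. [i]) ` {..<k}"
  "a < k \<Longrightarrow> nbhd (tree_V k) tree_E [a] = insert [] ((\<lambda>j. [a, j]) ` {..<k})"
  "a < k \<Longrightarrow> nbhd (tree_V k) tree_E [a, b] = {[a]}"
  unfolding nbhd_def by (auto elim!: tree_V_cases)

lemma obtain_other_below:
  assumes "2 \<le> k"
  obtains c' :: nat where "c' < k" "c' \<noteq> c"
  using assms that[of 0] that[of 1] by (cases "c = 0") auto

lemma twins_tree_V_root:
  assumes "2 \<le> k" "v \<in> tree_V k" "twins (tree_V k) tree_E [] v"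
  shows "v = []"
proof (rule ccontr)
  assume "v \<noteq> []"
  obtain c where c: "c < k" "c \<noteq> hd v" using obtain_other_below[OF assms(1)] .
  from assms(2) \<open>v \<noteq> []\<close> have "[c] \<notin> nbhd (tree_V k) tree_E v"
    using c by (cases rule: tree_V_cases) (auto simp: nbhd_tree_V)
  then have "\<not> twins (tree_V k) tree_E [] v"
    using c by (intro not_twinsI[of "[c]"]) (auto simp: nbhd_tree_V)
  with assms(3) show False by blast
qed

lemma twins_tree_V_child:
  assumes "a < k" "v \<in> tree_V k" "v \<noteq> []" "twins (tree_V k) tree_E [a] v"
  shows "v = [a]"
proof (rule ccontr)
  assume "v \<noteq> [a]"
  from assms(2,3) have "\<not> twins (tree_V k) tree_E [a] v"
  proof (cases rule: tree_V_cases)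
    case (child c)
    then show ?thesis
      using assms(1) \<open>v \<noteq> [a]\<close> by (intro not_twinsI[of "[a, 0]"]) (auto simp: nbhd_tree_V)
  next
    case (grandchild c d)
    then show ?thesis
      using assms(1) by (intro not_twinsI[of "[]"]) (auto simp: nbhd_tree_V)
  qed simp
  with assms(4) show False by blast
qed

lemma twins_tree_V_grandchild:
  assumes "a < k" "c < k" "twins (tree_V k) tree_E [a, b] [c, d]"
  shows "a = c"
proof (rule ccontr)
  assume "a \<noteq> c"
  then have "\<not> twins (tree_V k) tree_E [a, b] [c, d]"
    using assms(1,2) by (intro not_twinsI[of "[a]"]) (auto simp: nbhd_tree_V)
  with assms(3) show False by blast
qed

lemma twins_tree_V_imp:
  assumes "2 \<le> k" "u \<in> tree_V k" "v \<in> tree_V k" "u \<noteq> v" "twins (tree_V k) tree_E u v"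
  shows "\<exists>i a b. u = [i, a] \<and> v = [i, b]"
proof -
  have shallow: "\<exists>i a b. u = [i, a] \<and> v = [i, b]"
    if "u \<in> tree_V k" "v \<in> tree_V k" "u \<noteq> v" "twins (tree_V k) tree_E u v"
      "length u \<le> length v" for u v
    using that(1)
  proof (cases rule: tree_V_cases)
    case root
    then show ?thesis using twins_tree_V_root[OF assms(1) that(2)] that(3,4) by simp
  next
    case (child a)
    then have "v \<noteq> []" using that(5) by auto
    then have "v = [a]" using twins_tree_V_child[OF \<open>a < k\<close> that(2)] child that(4) by simp
    with child that(3) show ?thesis by simp
  next
    case (grandchild a b)
    from that(2) show ?thesis
    proof (cases rule: tree_V_cases)
      case (grandchild c d)
      then show ?thesis
        using twins_tree_V_grandchild[of a k c b d] \<open>u = [a, b]\<close> \<open>a < k\<close> that(4) by blast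
    qed (use grandchild that(5) in simp_all)
  qed
  show ?thesis
  proof (cases "length u \<le> length v")
    case False
    then have "\<exists>i a b. v = [i, a] \<and> u = [i, b]"
      using shallow[of v u] twins_sym[OF assms(5)] assms(2-4) by simp
    then show ?thesis by blast
  qed (use shallow assms in blast)
qed

lemma card_siblings: "card ((\<lambda>b. [i, b]) ` {..<k}) = k"
  by (simp add: card_image inj_on_def)

lemma twin_class_grandchild:
  assumes "2 \<le> k" "i < k" "a < k"
  shows "twin_class (tree_V k) tree_E [i, a] = (\<lambda>b. [i, b]) ` {..<k}"
proof -
  have "twins (tree_V k) tree_E [i, a] [i, b]" for b
    using assms(2) by (simp add: twins_def nbhd_tree_V)
  moreover have "v \<in> (\<lambda>b. [i, b]) ` {..<k}"
    if "v \<in> tree_V k" "twins (tree_V k) tree_E [i, a] v" for v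
    using twins_tree_V_imp[OF assms(1) _ that(1) _ that(2)] assms that(1) by (cases "v = [i, a]") auto
  ultimately show ?thesis
    using assms(2) unfolding twin_class_def by auto
qed

lemma twin_class_shallow:
  assumes "2 \<le> k" "u \<in> tree_V k" "length u \<le> 1"
  shows "twin_class (tree_V k) tree_E u = {u}"
proof -
  have "v = u" if "v \<in> tree_V k" "twins (tree_V k) tree_E u v" for v
    using twins_tree_V_imp[OF assms(1,2) that(1) _ that(2)] assms(3) by fastforce
  then show ?thesis
    using assms(2) unfolding twin_class_def by (auto simp: twins_def)
qed

lemma twin_number_tree_V:
  assumes "2 \<le> k"
  shows "twin_number (tree_V k) tree_E = k"
  unfolding twin_number_def
proof (rule Max_eqI)
  show "finite ((\<lambda>u. card (twin_class (tree_V k) tree_E u)) ` tree_V k)"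
    by (simp add: finite_tree_V)
next
  fix n assume "n \<in> (\<lambda>u. card (twin_class (tree_V k) tree_E u)) ` tree_V k"
  then obtain u where u: "u \<in> tree_V k" "n = card (twin_class (tree_V k) tree_E u)"
    by blast
  from u(1) show "n \<le> k"
    by (cases rule: tree_V_cases)
      (use u assms in \<open>simp_all add: twin_class_shallow twin_class_grandchild card_siblings\<close>)
next
  have "card (twin_class (tree_V k) tree_E [0, 0]) = k"
    using assms by (simp add: twin_class_grandchild card_siblings)
  moreover have "[0, 0] \<in> tree_V k" using assms by simp
  ultimately show "k \<in> (\<lambda>u. card (twin_class (tree_V k) tree_E u)) ` tree_V k"
    by (metis image_eqI)
qed

lemma setdist_tree_V:
  assumes "u \<in> tree_V k" "S \<subseteq> tree_V k"
  shows "setdist (tree_V k) tree_E u S = Min (tree_dist u ` S)"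
  unfolding setdist_def using assms gdist_prefix_closed[OF prefix_closed_tree_V]
  by (intro arg_cong[where f = Min] image_cong) auto

lemma setdist_tree_V_le:
  assumes "u \<in> tree_V k" "S \<subseteq> tree_V k" "w \<in> S"
  shows "setdist (tree_V k) tree_E u S \<le> tree_dist u w"
  using setdist_tree_V[OF assms(1,2)] finite_subset[OF assms(2) finite_tree_V] assms(3)
  by simp

lemma setdist_tree_V_eq_0_iff:
  assumes "u \<in> tree_V k" "S \<subseteq> tree_V k" "S \<noteq> {}"
  shows "setdist (tree_V k) tree_E u S = 0 \<longleftrightarrow> u \<in> S"
proof -
  have "finite S" using finite_subset[OF assms(2) finite_tree_V] .
  then have "Min (tree_dist u ` S) \<in> tree_dist u ` S" using assms(3) by simp
  then obtain w where "w \<in> S" "setdist (tree_V k) tree_E u S = tree_dist u w"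
    using setdist_tree_V[OF assms(1,2)] by auto
  then have "setdist (tree_V k) tree_E u S = 0 \<Longrightarrow> u \<in> S"
    by (simp add: tree_dist_eq_0_iff)
  moreover have "u \<in> S \<Longrightarrow> setdist (tree_V k) tree_E u S = 0"
    using setdist_tree_V_le[OF assms(1,2), of u] by simp
  ultimately show ?thesis by blast
qed

lemma setdist_tree_V_root: "u \<in> tree_V k \<Longrightarrow> setdist (tree_V k) tree_E u {[]} = length u"
  by (simp add: setdist_tree_V tree_dist_def)

definition ending_in :: "nat \<Rightarrow> nat \<Rightarrow> nat list set" where
  "ending_in k j = {v \<in> tree_V k. v \<noteq> [] \<and> last v = j}"

definition last_label_partition :: "nat \<Rightarrow> nat list set set" where
  "last_label_partition k = insert {[]} (ending_in k ` {..<k})"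

lemma ending_in_subset: "ending_in k j \<subseteq> tree_V k"
  by (auto simp: ending_in_def)

lemma setdist_grandchild_ending_in:
  assumes "a < k" "b < k" "j < k" "b \<noteq> j"
  shows "setdist (tree_V k) tree_E [a, b] (ending_in k j) = (if a = j then 1 else 2)"
proof -
  have "Min (tree_dist [a, b] ` ending_in k j) = (if a = j then 1 else 2)"
  proof (rule Min_eqI)
    show "finite (tree_dist [a, b] ` ending_in k j)"
      using finite_subset[OF ending_in_subset finite_tree_V] by simp
    show "(if a = j then 1 else 2) \<le> d" if d: "d \<in> tree_dist [a, b] ` ending_in k j" for d
    proof -
      obtain v where v: "v \<in> tree_V k" "v \<noteq> []" "last v = j" "d = tree_dist [a, b] v"
        using d unfolding ending_in_def by blast
      from v(1) show ?thesis
        by (cases rule: tree_V_cases) (use v assms(4) in \<open>auto simp: tree_dist_def\<close>)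
    qed
    show "(if a = j then 1 else 2) \<in> tree_dist [a, b] ` ending_in k j"
    proof (cases "a = j")
      case True
      then show ?thesis using assms(3)
        by (intro image_eqI[of _ _ "[j]"]) (auto simp: ending_in_def tree_dist_def)
    next
      case False
      then show ?thesis using assms(1,3,4)
        by (intro image_eqI[of _ _ "[a, j]"]) (auto simp: ending_in_def tree_dist_def)
    qed
  qed
  then show ?thesis using assms(1,2) by (simp add: setdist_tree_V ending_in_subset)
qed

lemma mem_ending_in: "j < k \<Longrightarrow> [j] \<in> ending_in k j"
  by (simp add: ending_in_def)

lemma disjnt_ending_in: "a \<noteq> b \<Longrightarrow> disjnt (ending_in k a) (ending_in k b)"
  by (auto simp: disjnt_def ending_in_def)

lemma partition_on_last_label_partition:
  "partition_on (tree_V k) (last_label_partition k)"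
proof (rule partition_onI)
  have "u \<in> \<Union> (last_label_partition k)" if "u \<in> tree_V k" for u
  proof (cases "u = []")
    case False
    with that have "last u < k" "u \<in> ending_in k (last u)"
      by (auto simp: ending_in_def elim: tree_V_cases)
    then show ?thesis by (auto simp: last_label_partition_def)
  qed (simp add: last_label_partition_def)
  then show "\<Union> (last_label_partition k) = tree_V k"
    using ending_in_subset by (fastforce simp: last_label_partition_def)
  show "disjnt p q" if "p \<in> last_label_partition k" "q \<in> last_label_partition k" "p \<noteq> q" for p q
    using that disjnt_ending_in
    by (auto simp: last_label_partition_def disjnt_def ending_in_def)
  show "{} \<notin> last_label_partition k"
    using mem_ending_in by (force simp: last_label_partition_def)
qed

lemma card_last_label_partition: "card (last_label_partition k) = k + 1"
proof -
  have "inj_on (ending_in k) {..<k}"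
  proof (rule inj_onI)
    fix a b assume "a \<in> {..<k}" "ending_in k a = ending_in k b"
    moreover have "[a] \<in> ending_in k a" using \<open>a \<in> {..<k}\<close> by (simp add: ending_in_def)
    ultimately have "[a] \<in> ending_in k b" by simp
    then show "a = b" by (simp add: ending_in_def)
  qed
  moreover have "[] \<notin> ending_in k j" for j by (simp add: ending_in_def)
  then have "{[]} \<notin> ending_in k ` {..<k}" by (metis imageE insertI1)
  ultimately show ?thesis by (simp add: last_label_partition_def card_image)
qed

lemma setdist_tree_V_neq_if_mem:
  assumes "u \<in> tree_V k" "v \<in> tree_V k" "S \<subseteq> tree_V k" "u \<in> S" "v \<notin> S"
  shows "setdist (tree_V k) tree_E u S \<noteq> setdist (tree_V k) tree_E v S"
proof -
  have "S \<noteq> {}" using assms(4) by blast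
  then show ?thesis
    using setdist_tree_V_eq_0_iff[OF assms(1,3)] setdist_tree_V_eq_0_iff[OF assms(2,3)] assms(4,5)
    by simp
qed

lemma locating_last_label_partition:
  "locating (tree_V k) tree_E (last_label_partition k)"
  unfolding locating_def
proof (intro ballI impI)
  fix u v assume uv: "u \<in> tree_V k" "v \<in> tree_V k" "u \<noteq> v"
  let ?sd = "setdist (tree_V k) tree_E"
  have root: "{[]} \<in> last_label_partition k" and
    ending: "\<And>j. j < k \<Longrightarrow> ending_in k j \<in> last_label_partition k"
    by (simp_all add: last_label_partition_def)
  show "\<exists>S\<in>last_label_partition k. ?sd u S \<noteq> ?sd v S"
  proof (cases "length u = length v")
    case False
    then show ?thesis
      using root setdist_tree_V_root[OF uv(1)] setdist_tree_V_root[OF uv(2)] by metis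
  next
    case True
    consider (child) a c where "u = [a]" "v = [c]" "a < k" "c < k"
      | (grandchild) a b c d where "u = [a, b]" "v = [c, d]" "a < k" "b < k" "c < k" "d < k"
      using uv True by (cases rule: tree_V_cases[OF uv(1)]; cases rule: tree_V_cases[OF uv(2)]) auto
    then show ?thesis
    proof cases
      case child
      then show ?thesis using uv
        by (intro bexI[OF setdist_tree_V_neq_if_mem ending[of a]])
          (auto simp: ending_in_def)
    next
      case grandchild
      show ?thesis
      proof (cases "b = d")
        case False
        then show ?thesis using uv grandchild
          by (intro bexI[OF setdist_tree_V_neq_if_mem ending[of b]])
            (auto simp: ending_in_def)
      next
        case True
        then have "a \<noteq> c" using grandchild uv(3) by simp
        then obtain j where "j \<in> {a, c}" "j \<noteq> b" using True by blast
        then show ?thesis using grandchild True \<open>a \<noteq> c\<close>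
          by (intro bexI[OF _ ending[of j]]) (auto simp: setdist_grandchild_ending_in)
      qed
    qed
  qed
qed

lemma tree_dist_siblings_eq:
  assumes "w \<in> tree_V k" "w \<noteq> [i, a]" "w \<noteq> [i, b]"
  shows "tree_dist [i, a] w = tree_dist [i, b] w"
  using assms by (cases rule: tree_V_cases[OF assms(1)]) (auto simp: tree_dist_def)

context
  fixes k :: nat and P :: "nat list set set"
  assumes partition: "partition_on (tree_V k) P"
begin

lemma part_subset: "S \<in> P \<Longrightarrow> S \<subseteq> tree_V k"
  using partition_onD1[OF partition] by blast

lemma part_nonempty: "S \<in> P \<Longrightarrow> S \<noteq> {}"
  using partition_onD3[OF partition] by blast

lemma setdist_eq_if_same_part:
  assumes "u \<in> tree_V k" "v \<in> tree_V k" "S \<in> P" "u \<in> S" "v \<in> S"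
    and outside: "\<And>T. T \<in> P \<Longrightarrow> u \<notin> T \<Longrightarrow> v \<notin> T \<Longrightarrow>
      setdist (tree_V k) tree_E u T = setdist (tree_V k) tree_E v T"
  shows "\<forall>T\<in>P. setdist (tree_V k) tree_E u T = setdist (tree_V k) tree_E v T"
proof
  fix T assume T: "T \<in> P"
  show "setdist (tree_V k) tree_E u T = setdist (tree_V k) tree_E v T"
  proof (cases "T = S")
    case True
    then show ?thesis
      using setdist_tree_V_eq_0_iff[OF _ part_subset part_nonempty] assms(1-5) by metis
  next
    case False
    then have "u \<notin> T" "v \<notin> T"
      using partition_on_part_unique[OF partition T \<open>S \<in> P\<close>] assms(4,5) by auto
    then show ?thesis using outside T by blast
  qed
qed

lemma setdist_siblings_eq_if_same_part:
  assumes "i < k" "a < k" "b < k" "S \<in> P" "[i, a] \<in> S" "[i, b] \<in> S"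
  shows "\<forall>T\<in>P. setdist (tree_V k) tree_E [i, a] T = setdist (tree_V k) tree_E [i, b] T"
proof (rule setdist_eq_if_same_part)
  fix T assume T: "T \<in> P" "[i, a] \<notin> T" "[i, b] \<notin> T"
  have "tree_dist [i, a] w = tree_dist [i, b] w" if "w \<in> T" for w
    using that T part_subset[OF T(1)] by (intro tree_dist_siblings_eq) auto
  then have "tree_dist [i, a] ` T = tree_dist [i, b] ` T"
    by (rule image_cong[OF refl])
  then show "setdist (tree_V k) tree_E [i, a] T = setdist (tree_V k) tree_E [i, b] T"
    using assms(1-3) part_subset[OF T(1)] by (simp add: setdist_tree_V)
qed (use assms in simp_all)

lemma setdist_eq_if_same_part_near_all:
  assumes "u \<in> tree_V k" "v \<in> tree_V k" "S \<in> P" "u \<in> S" "v \<in> S"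
    "\<forall>T\<in>P. setdist (tree_V k) tree_E u T \<le> 1" "\<forall>T\<in>P. setdist (tree_V k) tree_E v T \<le> 1"
  shows "\<forall>T\<in>P. setdist (tree_V k) tree_E u T = setdist (tree_V k) tree_E v T"
proof (rule setdist_eq_if_same_part[OF assms(1-5)])
  fix T assume "T \<in> P" "u \<notin> T" "v \<notin> T"
  then show "setdist (tree_V k) tree_E u T = setdist (tree_V k) tree_E v T"
    using setdist_tree_V_eq_0_iff[OF _ part_subset part_nonempty] assms(1,2,6,7)
    by (metis le_antisym less_one not_le)
qed

lemma setdist_le_1_if_meets_nbhd:
  assumes "u \<in> tree_V k" "\<forall>T\<in>P. \<exists>w\<in>T. tree_E u w"
  shows "\<forall>T\<in>P. setdist (tree_V k) tree_E u T \<le> 1"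
proof
  fix T assume "T \<in> P"
  then obtain w where "w \<in> T" "tree_E u w" using assms(2) by blast
  then have "tree_dist u w \<le> 1" using tree_dist_edge[of u w u] by simp
  then show "setdist (tree_V k) tree_E u T \<le> 1"
    using setdist_tree_V_le[OF assms(1) part_subset[OF \<open>T \<in> P\<close>] \<open>w \<in> T\<close>] by linarith
qed

context
  assumes locating: "locating (tree_V k) tree_E P" and few_parts: "card P \<le> k"
begin

lemma grandchild_in_every_part:
  assumes "i < k" "T \<in> P"
  shows "\<exists>a<k. [i, a] \<in> T"
proof -
  have "\<exists>x\<in>(\<lambda>a. [i, a]) ` {..<k}. x \<in> T"
  proof (rule partition_on_meets_every_part[OF partition finite_tree_V _ _ _ assms(2)])
    show "(\<lambda>a. [i, a]) ` {..<k} \<subseteq> tree_V k" using assms(1) by auto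
    show "card P \<le> card ((\<lambda>a. [i, a]) ` {..<k})" using few_parts by (simp add: card_siblings)
    fix S x y assume S: "S \<in> P" "x \<in> S" "y \<in> S"
      and "x \<in> (\<lambda>a. [i, a]) ` {..<k}" "y \<in> (\<lambda>a. [i, a]) ` {..<k}"
    then obtain a b where ab: "a < k" "b < k" "x = [i, a]" "y = [i, b]" by blast
    then show "x = y"
      using locating_eqI[OF locating, of x y] assms(1) S
        setdist_siblings_eq_if_same_part[OF assms(1) ab(1,2) S(1)] by simp
  qed
  then show ?thesis by auto
qed

lemma setdist_child_le_1:
  assumes "i < k"
  shows "\<forall>T\<in>P. setdist (tree_V k) tree_E [i] T \<le> 1"
proof (rule setdist_le_1_if_meets_nbhd)
  show "\<forall>T\<in>P. \<exists>w\<in>T. tree_E [i] w"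
    using grandchild_in_every_part[OF assms] tree_E_simps(3)[of i] by metis
qed (use assms in simp)

lemma child_in_every_part:
  assumes "T \<in> P"
  shows "\<exists>i<k. [i] \<in> T"
proof -
  have "\<exists>x\<in>(\<lambda>i. [i]) ` {..<k}. x \<in> T"
  proof (rule partition_on_meets_every_part[OF partition finite_tree_V _ _ _ assms])
    show "(\<lambda>i. [i]) ` {..<k} \<subseteq> tree_V k" by auto
    show "card P \<le> card ((\<lambda>i. [i]) ` {..<k})" using few_parts by (simp add: card_image inj_on_def)
    fix S x y assume S: "S \<in> P" "x \<in> S" "y \<in> S"
      and "x \<in> (\<lambda>i. [i]) ` {..<k}" "y \<in> (\<lambda>i. [i]) ` {..<k}"
    then obtain a b where ab: "a < k" "b < k" "x = [a]" "y = [b]" by blast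
    then show "x = y"
      using locating_eqI[OF locating, of x y] S setdist_eq_if_same_part_near_all[of x y S]
        setdist_child_le_1[OF ab(1)] setdist_child_le_1[OF ab(2)]
      by simp
  qed
  then show ?thesis by auto
qed

lemma few_parts_absurd: False
proof -
  have root_near: "\<forall>T\<in>P. setdist (tree_V k) tree_E [] T \<le> 1"
  proof (rule setdist_le_1_if_meets_nbhd)
    show "\<forall>T\<in>P. \<exists>w\<in>T. tree_E [] w"
      using child_in_every_part tree_E_simps(1) by metis
  qed simp
  obtain S where "S \<in> P" "[] \<in> S"
    using partition_onD1[OF partition] by (metis UnionE tree_V_simps(1))
  moreover obtain i where "i < k" "[i] \<in> S" using child_in_every_part[OF \<open>S \<in> P\<close>] by blast
  ultimately have "\<forall>T\<in>P. setdist (tree_V k) tree_E [] T = setdist (tree_V k) tree_E [i] T"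
    using root_near setdist_child_le_1[of i] by (intro setdist_eq_if_same_part_near_all) simp_all
  then have "[] = [i]"
    by (rule locating_eqI[OF locating, rotated 2]) (use \<open>i < k\<close> in simp_all)
  then show False by simp
qed

end

end

lemma card_locating_partition_tree_V_ge:
  assumes "partition_on (tree_V k) P" "locating (tree_V k) tree_E P"
  shows "k + 1 \<le> card P"
  using few_parts_absurd[OF assms] by fastforce

theorem proposition6:
  fixes k :: nat
  assumes "k \<ge> 2"
  shows "twin_number (tree_V k) tree_E = k \<and> partition_dim (tree_V k) tree_E = k + 1"
proof
  show "twin_number (tree_V k) tree_E = k"
    using twin_number_tree_V[OF assms] .
  show "partition_dim (tree_V k) tree_E = k + 1"
    unfolding partition_dim_def
  proof (rule Least_equality)
    show "\<exists>P. partition_on (tree_V k) P \<and> locating (tree_V k) tree_E P \<and> card P = k + 1"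
      using partition_on_last_label_partition locating_last_label_partition
        card_last_label_partition by blast
    show "k + 1 \<le> m"
      if "\<exists>P. partition_on (tree_V k) P \<and> locating (tree_V k) tree_E P \<and> card P = m" for m
      using that card_locating_partition_tree_V_ge by blast
  qed
qed

end
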